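(* Let $\xi\ge 0$. For every set $E\subset\mathbb{R}_+$, $$\mathrm{Dim}_H E=\inf\Big\{\rho>0:\ \sum_{n\ge -1}\widetilde{\nu}^n_{\rho,\xi}(E)<+\infty\Big\},$$ where for $\rho>0$ and $n\ge -1$, $$\widetilde{\nu}^n_{\rho,\xi}(E)=\inf\Big\{\sum_{i=1}^m\Big(\frac{\mathrm{diam}(I_i)}{2^n}\Big)^\rho\Big|\log_2\frac{\mathrm{diam}(I_i)}{2^n}\Big|^\xi:\ \{I_i\}_{i=1}^m\in\mathcal{I}_n(E)\Big\}.$$
   Context: Let $S_{-1}=[0,1/2)$ and $S_n=[2^{n-1},2^n)$ for $n\ge 0$. For $E\subset\mathbb{R}_+$ and $n\ge -1$, $\mathcal{I}_n(E)$ is the set of finite families $\{I_i\}_{i=1}^m$ of intervals $I_i=[x_i,y_i]$ with $x_i,y_i\in\mathbb{N}$, $y_i>x_i$, $I_i\subset S_n$, and $E\cap S_n\subset\bigcup_i I_i$; $\mathrm{diam}([a,b])=b-a$. For $\rho\ge0$, $\nu^n_\rho(E)=\inf\{\sum_{i=1}^m (\mathrm{diam}(I_i)/2^n)^\rho : \{I_i\}\in\mathcal{I}_n(E)\}$, and the macroscopic Hausdorff dimension is $\mathrm{Dim}_H E=\inf\{\rho>0:\sum_{n\ge-1}\nu^n_\rho(E)<\infty\}$. *)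

theory Defs
  imports "HOL-Analysis.Analysis"
begin

definition shell :: "int \<Rightarrow> real set" where
  "shell n = (if n = -1 then {0..<1/2} else {2 powr (real_of_int n - 1)..<2 powr (real_of_int n)})"

text \<open>I_n(E): finite families of integer-endpoint intervals [x,y] (x<y), contained in S(n),
  covering E \<inter> S(n). A family is encoded as a finite set of endpoint pairs.\<close>
definition covers :: "int \<Rightarrow> real set \<Rightarrow> (nat \<times> nat) set set" where
  "covers n E = {F. finite F \<and> (\<forall>(x,y)\<in>F. x < y \<and> {real x..real y} \<subseteq> shell n)
      \<and> E \<inter> shell n \<subseteq> (\<Union>(x,y)\<in>F. {real x..real y})}"

text \<open>nu^n_rho(E); the infimum over an empty family of covers is +infinity.\<close>
definition nu :: "int \<Rightarrow> real \<Rightarrow> real set \<Rightarrow> ennreal" where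
  "nu n \<rho> E = (INF F\<in>covers n E.
      ennreal (\<Sum>(x,y)\<in>F. ((real y - real x) / 2 powr real_of_int n) powr \<rho>))"

definition nu_log :: "int \<Rightarrow> real \<Rightarrow> real \<Rightarrow> real set \<Rightarrow> ennreal" where
  "nu_log n \<rho> \<xi> E = (INF F\<in>covers n E.
      ennreal (\<Sum>(x,y)\<in>F. ((real y - real x) / 2 powr real_of_int n) powr \<rho>
                 * \<bar>log 2 ((real y - real x) / 2 powr real_of_int n)\<bar> powr \<xi>))"

text \<open>Macroscopic Hausdorff dimension; sums over n >= -1 are indexed by k = n+1.
  Infimum of the empty set is +infinity (in ereal).\<close>
definition macro_dimH :: "real set \<Rightarrow> ereal" where
  "macro_dimH E = Inf {ereal \<rho> | \<rho>. \<rho> > 0 \<and> (\<Sum>k. nu (int k - 1) \<rho> E) < \<infinity>}"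

end

theory Submission
  imports Defs
begin

text \<open>Every interval of a cover in \<open>I\<^sub>n(E)\<close> has relative size \<open>r = diam(I)/2^n\<close> in
  \<open>(0, 1/2)\<close>. There \<open>|log\<^sub>2 r| \<ge> 1\<close>, so the logarithmic factor only increases the
  covering sums, while \<open>r^\<epsilon> |log\<^sub>2 r|^\<xi>\<close> stays bounded for every \<open>\<epsilon> > 0\<close>.
  Hence, uniformly in \<open>n\<close>, the modified quantity at exponent \<open>\<rho>\<close> lies between
  \<open>\<nu>\<^sup>n\<^sub>\<rho>(E)\<close> and \<open>C\<^sub>\<epsilon> \<nu>\<^sup>n\<^sub>\<rho>\<^sub>-\<^sub>\<epsilon>(E)\<close>, and the two sets of
  exponents with finite sum have the same infimum.\<close>

lemma ln_le_powr_div: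
  fixes x d :: real
  assumes "0 < x" "0 < d"
  shows "ln x \<le> x powr d / d"
proof -
  have "d * ln x = ln (x powr d)" using assms by (simp add: ln_powr)
  also have "\<dots> \<le> x powr d" using assms by (intro ln_bound) simp
  finally show ?thesis using assms by (simp add: pos_le_divide_eq mult.commute)
qed

lemma powr_mult_abs_log_powr_le:
  fixes r \<epsilon> \<xi> :: real
  assumes "0 < r" "r \<le> 1" "0 < \<epsilon>" "0 \<le> \<xi>"
  shows "r powr \<epsilon> * \<bar>log 2 r\<bar> powr \<xi> \<le> ((\<xi> + 1) / (\<epsilon> * ln 2)) powr \<xi>"
proof -
  define d where "d = \<epsilon> / (\<xi> + 1)"
  define K where "K = (\<xi> + 1) / (\<epsilon> * ln 2)"
  have d: "0 < d" and K: "0 < K" using assms by (simp_all add: d_def K_def)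
  have "\<bar>log 2 r\<bar> = ln (1 / r) / ln 2"
    using assms by (simp add: log_def ln_div)
  also have "\<dots> \<le> (1 / r) powr d / d / ln 2"
    using assms d by (intro divide_right_mono ln_le_powr_div) auto
  also have "\<dots> = r powr (- d) * K"
    using assms by (simp add: d_def K_def powr_minus_divide powr_divide)
  finally have "\<bar>log 2 r\<bar> powr \<xi> \<le> (r powr (- d) * K) powr \<xi>"
    using assms by (intro powr_mono2) auto
  also have "\<dots> = r powr (- d * \<xi>) * K powr \<xi>"
    using assms K by (simp add: powr_mult powr_powr)
  finally have "r powr \<epsilon> * \<bar>log 2 r\<bar> powr \<xi> \<le> r powr (\<epsilon> - d * \<xi>) * K powr \<xi>"
    using assms by (simp add: mult_left_mono powr_diff powr_minus_divide field_simps)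
  also have "\<dots> \<le> K powr \<xi>"
  proof -
    have "d * \<xi> \<le> \<epsilon>" using assms by (simp add: d_def field_simps)
    then have "r powr (\<epsilon> - d * \<xi>) \<le> 1" using assms by (intro powr_le1) auto
    then show ?thesis by (simp add: mult_left_le_one_le)
  qed
  finally show ?thesis by (simp add: K_def)
qed

lemma ennreal_mult_INF:
  fixes c :: ennreal and g :: "'a \<Rightarrow> ennreal"
  assumes "0 < c" "c < top"
  shows "c * (INF x\<in>S. g x) = (INF x\<in>S. c * g x)"
proof (cases "S = {}")
  case True
  then show ?thesis using assms by (simp add: ennreal_mult_top)
next
  case False
  have "c * Inf (g ` S) = Inf ((*) c ` g ` S)"
  proof (rule continuous_at_Inf_mono)
    show "mono ((*) c)" by (simp add: mono_def mult_left_mono)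
    show "continuous (at_right (Inf (g ` S))) ((*) c)"
      using ennreal_continuous_on_cmult[OF assms(2) continuous_on_id, of UNIV]
      by (simp add: continuous_on_eq_continuous_at continuous_at_imp_continuous_at_within)
  qed (use False in auto)
  then show ?thesis by (simp add: image_image)
qed

lemma covers_relative_diam_bounds:
  assumes "F \<in> covers n E" "(x, y) \<in> F"
  shows "0 < (real y - real x) / 2 powr real_of_int n"
    and "(real y - real x) / 2 powr real_of_int n < 1/2"
proof -
  have "x < y" and "{real x..real y} \<subseteq> shell n"
    using assms by (auto simp: covers_def)
  then have xy: "real x \<in> shell n" "real y \<in> shell n" by auto
  show "0 < (real y - real x) / 2 powr real_of_int n" using \<open>x < y\<close> by simp
  \<comment> \<open>No integer interval fits into \<open>S\<^sub>-\<^sub>1 = [0, 1/2)\<close>, so only \<open>n \<ge> 0\<close> occurs here.\<close>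
  have "n \<noteq> -1" using \<open>x < y\<close> xy(2) by (auto simp: shell_def)
  then have "2 powr (real_of_int n) / 2 \<le> real x" "real y < 2 powr real_of_int n"
    using xy by (auto simp: shell_def powr_diff)
  then show "(real y - real x) / 2 powr real_of_int n < 1/2"
    by (simp add: divide_less_eq)
qed

lemma INF_covers_mono:
  fixes f g :: "real \<Rightarrow> real"
  assumes "\<And>r. 0 < r \<Longrightarrow> r < 1/2 \<Longrightarrow> f r \<le> g r"
  shows "(INF F\<in>covers n E. ennreal (\<Sum>(x,y)\<in>F. f ((real y - real x) / 2 powr real_of_int n)))
       \<le> (INF F\<in>covers n E. ennreal (\<Sum>(x,y)\<in>F. g ((real y - real x) / 2 powr real_of_int n)))"
proof (rule INF_mono)
  fix F assume F: "F \<in> covers n E"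
  have "(\<Sum>(x,y)\<in>F. f ((real y - real x) / 2 powr real_of_int n))
      \<le> (\<Sum>(x,y)\<in>F. g ((real y - real x) / 2 powr real_of_int n))"
    using assms covers_relative_diam_bounds[OF F] by (intro sum_mono) auto
  with F show "\<exists>F'\<in>covers n E.
      ennreal (\<Sum>(x,y)\<in>F'. f ((real y - real x) / 2 powr real_of_int n))
      \<le> ennreal (\<Sum>(x,y)\<in>F. g ((real y - real x) / 2 powr real_of_int n))"
    by (auto intro: ennreal_leI)
qed

lemma nu_le_nu_log:
  assumes "0 \<le> \<xi>"
  shows "nu n \<rho> E \<le> nu_log n \<rho> \<xi> E"
proof -
  have "r powr \<rho> \<le> r powr \<rho> * \<bar>log 2 r\<bar> powr \<xi>" if "0 < r" "r < 1/2" for r :: real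
  proof -
    have "log 2 r < log 2 (1/2)" using that by simp
    then have "1 \<le> \<bar>log 2 r\<bar>" by (simp add: log_divide)
    then have "1 \<le> \<bar>log 2 r\<bar> powr \<xi>" using assms by (simp add: ge_one_powr_ge_zero)
    then show ?thesis by (simp add: mult_le_cancel_left1)
  qed
  then show ?thesis
    unfolding nu_def nu_log_def
    using INF_covers_mono[where f = "\<lambda>r. r powr \<rho>" and g = "\<lambda>r. r powr \<rho> * \<bar>log 2 r\<bar> powr \<xi>"]
    by simp
qed

lemma nu_log_le_const_mult_nu:
  assumes "0 \<le> \<xi>" "\<rho> < \<rho>'"
  defines "C \<equiv> ((\<xi> + 1) / ((\<rho>' - \<rho>) * ln 2)) powr \<xi>"
  shows "nu_log n \<rho>' \<xi> E \<le> ennreal C * nu n \<rho> E"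
proof -
  have C: "0 < C" using assms by (simp add: C_def)
  have "r powr \<rho>' * \<bar>log 2 r\<bar> powr \<xi> \<le> C * r powr \<rho>" if "0 < r" "r < 1/2" for r :: real
  proof -
    have "r powr \<rho>' * \<bar>log 2 r\<bar> powr \<xi> = r powr \<rho> * (r powr (\<rho>' - \<rho>) * \<bar>log 2 r\<bar> powr \<xi>)"
      using that by (simp add: powr_diff)
    also have "\<dots> \<le> r powr \<rho> * C"
      unfolding C_def using that assms by (intro mult_left_mono powr_mult_abs_log_powr_le) auto
    finally show ?thesis by (simp add: mult.commute)
  qed
  then have "nu_log n \<rho>' \<xi> E
      \<le> (INF F\<in>covers n E. ennreal (\<Sum>(x,y)\<in>F. C * ((real y - real x) / 2 powr real_of_int n) powr \<rho>))"
    unfolding nu_log_def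
    using INF_covers_mono[where f = "\<lambda>r. r powr \<rho>' * \<bar>log 2 r\<bar> powr \<xi>" and g = "\<lambda>r. C * r powr \<rho>"]
    by simp
  also have "\<dots> = (INF F\<in>covers n E.
      ennreal C * ennreal (\<Sum>(x,y)\<in>F. ((real y - real x) / 2 powr real_of_int n) powr \<rho>))"
    using C by (simp add: sum_distrib_left[symmetric] case_prod_unfold ennreal_mult')
  also have "\<dots> = ennreal C * nu n \<rho> E"
    unfolding nu_def using C by (intro ennreal_mult_INF[symmetric]) auto
  finally show ?thesis .
qed

lemma Inf_ereal_Collect_eq_if_interleaved:
  assumes "\<And>\<rho>. Q \<rho> \<Longrightarrow> P \<rho>" and "\<And>\<rho> \<rho>'. P \<rho> \<Longrightarrow> \<rho> < \<rho>' \<Longrightarrow> Q \<rho>'"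
  shows "Inf {ereal \<rho> | \<rho>. P \<rho>} = Inf {ereal \<rho> | \<rho>. Q \<rho>}"
proof (rule antisym)
  show "Inf {ereal \<rho> | \<rho>. P \<rho>} \<le> Inf {ereal \<rho> | \<rho>. Q \<rho>}"
    using assms(1) by (intro Inf_superset_mono) auto
  show "Inf {ereal \<rho> | \<rho>. Q \<rho>} \<le> Inf {ereal \<rho> | \<rho>. P \<rho>}"
  proof (rule Inf_greatest)
    fix z assume "z \<in> {ereal \<rho> | \<rho>. P \<rho>}"
    then obtain \<rho> where "z = ereal \<rho>" "P \<rho>" by auto
    moreover have "Inf {ereal \<rho> | \<rho>. Q \<rho>} \<le> ereal \<rho> + ereal e" if "0 < e" for e
      using assms(2)[OF \<open>P \<rho>\<close>, of "\<rho> + e"] that by (intro Inf_lower) auto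
    ultimately show "Inf {ereal \<rho> | \<rho>. Q \<rho>} \<le> z" by (auto intro: ereal_le_epsilon2)
  qed
qed

theorem lemma3:
  fixes \<xi> :: real and E :: "real set"
  assumes "\<xi> \<ge> 0" and "E \<subseteq> {0..}"
  shows "macro_dimH E =
    Inf {ereal \<rho> | \<rho>. \<rho> > 0 \<and> (\<Sum>k. nu_log (int k - 1) \<rho> \<xi> E) < \<infinity>}"
  unfolding macro_dimH_def
proof (rule Inf_ereal_Collect_eq_if_interleaved)
  fix \<rho> :: real
  assume "\<rho> > 0 \<and> (\<Sum>k. nu_log (int k - 1) \<rho> \<xi> E) < \<infinity>"
  moreover have "(\<Sum>k. nu (int k - 1) \<rho> E) \<le> (\<Sum>k. nu_log (int k - 1) \<rho> \<xi> E)"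
    using nu_le_nu_log[OF assms(1)] by (intro suminf_le) auto
  ultimately show "\<rho> > 0 \<and> (\<Sum>k. nu (int k - 1) \<rho> E) < \<infinity>" by auto
next
  fix \<rho> \<rho>' :: real
  assume \<rho>: "\<rho> > 0 \<and> (\<Sum>k. nu (int k - 1) \<rho> E) < \<infinity>" and "\<rho> < \<rho>'"
  obtain C where "\<And>n. nu_log n \<rho>' \<xi> E \<le> ennreal C * nu n \<rho> E"
    using nu_log_le_const_mult_nu[OF assms(1) \<open>\<rho> < \<rho>'\<close>] by blast
  then have "(\<Sum>k. nu_log (int k - 1) \<rho>' \<xi> E) \<le> (\<Sum>k. ennreal C * nu (int k - 1) \<rho> E)"
    by (intro suminf_le) auto
  also have "\<dots> = ennreal C * (\<Sum>k. nu (int k - 1) \<rho> E)" by simp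
  also have "\<dots> < \<infinity>" using \<rho> by (simp add: ennreal_mult_less_top)
  finally show "\<rho>' > 0 \<and> (\<Sum>k. nu_log (int k - 1) \<rho>' \<xi> E) < \<infinity>"
    using \<rho> \<open>\<rho> < \<rho>'\<close> by auto
qed

end
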